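(* In every symmetric instance with $k$ signals ($2\le k\le n$), for every direct and persuasive scheme $\varphi$ that recommends only actions in $[k]$, there exist $s\in[-\infty,0]$ and an $s$-Pareto point collection $\mathcal P$ with $u_{\mathcal S}(\mathcal P)\ge u_{\mathcal S}(\varphi)$.
   Context: Model: a receiver chooses one of the actions $[n]$; each action $i$ has a type $\theta_i$; the state $\boldsymbol\theta=(\theta_1,\dots,\theta_n)$ is drawn from a commonly known distribution $q$ over a finite set of type vectors. Each type $t$ has receiver value $\rho(t)$ and sender value $\xi(t)$. A signaling scheme with $k$ signals maps each state to a distribution over $k$ signals; the receiver picks an action maximizing her conditional expected utility given the signal, ties broken in favor of the sender; $u_{\mathcal S},u_{\mathcal R}$ denote expected utilities. Direct: each signal recommends an action; persuasive: for each signal sent with positive probability recommending $i$, $\mathbb E[\rho(\theta_i)\mid\sigma]\ge\mathbb E[\rho(\theta_j)\mid\sigma]$ for all $j$. $\rho_E=\max_{i}\sum_{\boldsymbol\theta}q_{\boldsymbol\theta}\rho(\theta_i)$. Symmetric instance: $q_{\boldsymbol\theta}=q_{\boldsymbol\theta'}$ whenever $\boldsymbol\theta'$ is a permutation of $\boldsymbol\theta$; types in a state are pairwise distinct. Identify each type $c$ with the point $(\rho(c),\xi(c))$. For a $k$-set $C$ of types, $q_C=\Pr[\{\theta_1,\dots,\theta_k\}=C]$. For $s\in(-\infty,0]$, a point $p\in\mathrm{conv}(C)$ corresponds to slope $s$ if it maximizes $y-sx$ over $(x,y)\in\mathrm{conv}(C)$; it corresponds to slope $-\infty$ if it maximizes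 the first coordinate over $\mathrm{conv}(C)$. A point collection $\mathcal P$ assigns to each $C$ with $q_C>0$ a point $p(C)=(p_{\mathcal R}(C),p_{\mathcal S}(C))\in\mathrm{conv}(C)$; $u_{\mathcal S}(\mathcal P)=\sum_Cq_Cp_{\mathcal S}(C)$, $u_{\mathcal R}(\mathcal P)=\sum_Cq_Cp_{\mathcal R}(C)$. $\mathcal P$ is $s$-Pareto if every $p(C)$ corresponds to slope $s$ and $u_{\mathcal R}(\mathcal P)\ge\rho_E$. *)

theory Defs
  imports "HOL-Analysis.Analysis" "HOL-Probability.Probability_Mass_Function"
begin

(* Conventions: actions are 0-based indices i < n (so [n] = {0..<n}, [k] = {0..<k});
   a state is a list theta of length n, theta ! i is the type of action i;
   the prior is a pmf q over states with finite support;
   signals are 0-based indices sigma < k; a scheme phi gives phi theta sigma = Pr[sigma | theta];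
   a direct scheme additionally has rec sigma = the action recommended by signal sigma. *)

definition symmetric_instance :: "'t list pmf \<Rightarrow> nat \<Rightarrow> bool" where
  "symmetric_instance q n \<longleftrightarrow>
     finite (set_pmf q) \<and>
     (\<forall>\<theta>\<in>set_pmf q. length \<theta> = n \<and> distinct \<theta>) \<and>
     (\<forall>\<theta> \<theta>'. mset \<theta>' = mset \<theta> \<longrightarrow> pmf q \<theta> = pmf q \<theta>')"

definition is_scheme :: "'t list pmf \<Rightarrow> nat \<Rightarrow> ('t list \<Rightarrow> nat \<Rightarrow> real) \<Rightarrow> bool" where
  "is_scheme q k \<phi> \<longleftrightarrow>
     (\<forall>\<theta>\<in>set_pmf q. (\<forall>\<sigma><k. 0 \<le> \<phi> \<theta> \<sigma>) \<and> (\<Sum>\<sigma><k. \<phi> \<theta> \<sigma>) = 1)"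

definition sig_prob :: "'t list pmf \<Rightarrow> ('t list \<Rightarrow> nat \<Rightarrow> real) \<Rightarrow> nat \<Rightarrow> real" where
  "sig_prob q \<phi> \<sigma> = (\<Sum>\<theta>\<in>set_pmf q. pmf q \<theta> * \<phi> \<theta> \<sigma>)"

definition cond_exp ::
  "'t list pmf \<Rightarrow> ('t list \<Rightarrow> nat \<Rightarrow> real) \<Rightarrow> ('t \<Rightarrow> real) \<Rightarrow> nat \<Rightarrow> nat \<Rightarrow> real" where
  "cond_exp q \<phi> f \<sigma> i =
     (\<Sum>\<theta>\<in>set_pmf q. pmf q \<theta> * \<phi> \<theta> \<sigma> * f (\<theta> ! i)) / sig_prob q \<phi> \<sigma>"

definition best_actions ::
  "'t list pmf \<Rightarrow> nat \<Rightarrow> ('t list \<Rightarrow> nat \<Rightarrow> real) \<Rightarrow> ('t \<Rightarrow> real) \<Rightarrow> nat \<Rightarrow> nat set" where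
  "best_actions q n \<phi> \<rho> \<sigma> =
     {i. i < n \<and> (\<forall>j<n. cond_exp q \<phi> \<rho> \<sigma> j \<le> cond_exp q \<phi> \<rho> \<sigma> i)}"

text \<open>Sender's expected utility: receiver best-responds, ties broken in favour of the sender.\<close>
definition sender_utility ::
  "'t list pmf \<Rightarrow> nat \<Rightarrow> nat \<Rightarrow> ('t list \<Rightarrow> nat \<Rightarrow> real) \<Rightarrow> ('t \<Rightarrow> real) \<Rightarrow> ('t \<Rightarrow> real) \<Rightarrow> real" where
  "sender_utility q n k \<phi> \<rho> \<xi> =
     (\<Sum>\<sigma>\<in>{\<sigma>. \<sigma> < k \<and> 0 < sig_prob q \<phi> \<sigma>}.
        sig_prob q \<phi> \<sigma> * Max ((\<lambda>i. cond_exp q \<phi> \<xi> \<sigma> i) ` best_actions q n \<phi> \<rho> \<sigma>))"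

definition direct_persuasive ::
  "'t list pmf \<Rightarrow> nat \<Rightarrow> nat \<Rightarrow> ('t list \<Rightarrow> nat \<Rightarrow> real) \<Rightarrow> (nat \<Rightarrow> nat) \<Rightarrow> ('t \<Rightarrow> real) \<Rightarrow> bool" where
  "direct_persuasive q n k \<phi> rec \<rho> \<longleftrightarrow>
     (\<forall>\<sigma><k. rec \<sigma> < n) \<and>
     (\<forall>\<sigma><k. 0 < sig_prob q \<phi> \<sigma> \<longrightarrow>
        (\<forall>j<n. cond_exp q \<phi> \<rho> \<sigma> j \<le> cond_exp q \<phi> \<rho> \<sigma> (rec \<sigma>)))"

definition rho_E :: "'t list pmf \<Rightarrow> nat \<Rightarrow> ('t \<Rightarrow> real) \<Rightarrow> real" where
  "rho_E q n \<rho> = Max ((\<lambda>i. \<Sum>\<theta>\<in>set_pmf q. pmf q \<theta> * \<rho> (\<theta> ! i)) ` {..<n})"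

definition qC :: "'t list pmf \<Rightarrow> nat \<Rightarrow> 't set \<Rightarrow> real" where
  "qC q k C = (\<Sum>\<theta>\<in>set_pmf q. if set (take k \<theta>) = C then pmf q \<theta> else 0)"

definition supp_sets :: "'t list pmf \<Rightarrow> nat \<Rightarrow> 't set set" where
  "supp_sets q k = {C. 0 < qC q k C}"

definition type_pt :: "('t \<Rightarrow> real) \<Rightarrow> ('t \<Rightarrow> real) \<Rightarrow> 't \<Rightarrow> real \<times> real" where
  "type_pt \<rho> \<xi> c = (\<rho> c, \<xi> c)"

definition conv_types :: "('t \<Rightarrow> real) \<Rightarrow> ('t \<Rightarrow> real) \<Rightarrow> 't set \<Rightarrow> (real \<times> real) set" where
  "conv_types \<rho> \<xi> C = convex hull (type_pt \<rho> \<xi> ` C)"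

definition corresponds_to_slope ::
  "('t \<Rightarrow> real) \<Rightarrow> ('t \<Rightarrow> real) \<Rightarrow> 't set \<Rightarrow> ereal \<Rightarrow> real \<times> real \<Rightarrow> bool" where
  "corresponds_to_slope \<rho> \<xi> C s p \<longleftrightarrow>
     p \<in> conv_types \<rho> \<xi> C \<and>
     (if s = -\<infinity> then (\<forall>z\<in>conv_types \<rho> \<xi> C. fst z \<le> fst p)
      else (\<forall>z\<in>conv_types \<rho> \<xi> C.
              snd z - real_of_ereal s * fst z \<le> snd p - real_of_ereal s * fst p))"

definition point_collection ::
  "'t list pmf \<Rightarrow> nat \<Rightarrow> ('t \<Rightarrow> real) \<Rightarrow> ('t \<Rightarrow> real) \<Rightarrow> ('t set \<Rightarrow> real \<times> real) \<Rightarrow> bool" where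
  "point_collection q k \<rho> \<xi> P \<longleftrightarrow> (\<forall>C\<in>supp_sets q k. P C \<in> conv_types \<rho> \<xi> C)"

definition uS_pc :: "'t list pmf \<Rightarrow> nat \<Rightarrow> ('t set \<Rightarrow> real \<times> real) \<Rightarrow> real" where
  "uS_pc q k P = (\<Sum>C\<in>supp_sets q k. qC q k C * snd (P C))"

definition uR_pc :: "'t list pmf \<Rightarrow> nat \<Rightarrow> ('t set \<Rightarrow> real \<times> real) \<Rightarrow> real" where
  "uR_pc q k P = (\<Sum>C\<in>supp_sets q k. qC q k C * fst (P C))"

definition s_pareto ::
  "'t list pmf \<Rightarrow> nat \<Rightarrow> nat \<Rightarrow> ('t \<Rightarrow> real) \<Rightarrow> ('t \<Rightarrow> real) \<Rightarrow> ereal \<Rightarrow> ('t set \<Rightarrow> real \<times> real) \<Rightarrow> bool" where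
  "s_pareto q n k \<rho> \<xi> s P \<longleftrightarrow>
     point_collection q k \<rho> \<xi> P \<and>
     (\<forall>C\<in>supp_sets q k. corresponds_to_slope \<rho> \<xi> C s (P C)) \<and>
     rho_E q n \<rho> \<le> uR_pc q k P"

end

theory Submission
  imports Defs "HOL-Combinatorics.Permutations"
begin

text \<open>
  For every signal fix the action the receiver actually plays: a best response, chosen among
  those the sender likes best. These are at most k actions, and since the prior is invariant
  under permuting positions, a permutation moving them into [k] does not change the expected
  outcome. Thus the scheme induces, for each state, a point in the convex hull of its first k
  types, and averaging these points over the states with the same set C of first k types gives
  a point collection with the scheme's sender utility and receiver utility at least rho_E.
  Among the point collections with receiver utility at least rho_E, the set of outcomes is
  compact and convex, so a sender-optimal one exists; separating its outcome from the strictly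
  better outcomes yields a direction (a1, a2) \<ge> 0 that every point p(C) maximises over conv(C),
  i.e. a common slope s = -a1/a2 \<in> [-\<infinity>, 0].
\<close>

section \<open>Supporting directions of planar convex sets\<close>

lemma bounded_below_along_ray:
  fixes b c d :: real
  assumes "\<forall>t>0. b \<le> c + t * d"
  shows "0 \<le> d" and "b \<le> c"
proof -
  show "0 \<le> d"
  proof (rule ccontr)
    assume "\<not> 0 \<le> d"
    then have "c + ((\<bar>c - b\<bar> + 1) / - d) * d < b" by simp
    moreover have "0 < (\<bar>c - b\<bar> + 1) / - d"
      using \<open>\<not> 0 \<le> d\<close> by (intro divide_pos_pos) auto
    ultimately show False using assms[rule_format, of "(\<bar>c - b\<bar> + 1) / - d"] by linarith
  qed
  show "b \<le> c"
  proof (rule field_le_epsilon)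
    fix e :: real assume "0 < e"
    have "e / (d + 1) * d \<le> e"
      using \<open>0 < e\<close> \<open>0 \<le> d\<close> by (simp add: field_simps)
    moreover have "b \<le> c + e / (d + 1) * d"
      using assms[rule_format, of "e / (d + 1)"] \<open>0 < e\<close> \<open>0 \<le> d\<close> by simp
    ultimately show "b \<le> c + e" by linarith
  qed
qed

lemma constrained_maximizer_supporting_direction:
  fixes S :: "(real \<times> real) set"
  assumes "convex S" and "z \<in> S" and "r \<le> fst z"
    and max: "\<forall>y\<in>S. r \<le> fst y \<longrightarrow> snd y \<le> snd z"
  obtains a1 a2 where "0 \<le> a1" "0 \<le> a2" "a1 \<noteq> 0 \<or> a2 \<noteq> 0"
    "\<forall>y\<in>S. a1 * fst y + a2 * snd y \<le> a1 * fst z + a2 * snd z"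
proof -
  (* T is closed under moving right and up, so a line separating S from T has a nonnegative
     normal; it passes through z since z is a limit point of T. *)
  define T where "T = {y :: real \<times> real. r \<le> fst y \<and> snd z < snd y}"
  have "convex T"
  proof -
    have "T = {y. (1, 0) \<bullet> y \<ge> r} \<inter> {y. (0, 1) \<bullet> y > snd z}"
      by (auto simp: T_def inner_prod_def)
    then show ?thesis by (simp add: convex_Int convex_halfspace_ge convex_halfspace_gt)
  qed
  moreover have "S \<inter> T = {}" using max by (auto simp: T_def not_less[symmetric])
  moreover have "(fst z, snd z + 1) \<in> T" using \<open>r \<le> fst z\<close> by (simp add: T_def)
  ultimately obtain a b where "a \<noteq> 0" and S_le: "\<forall>y\<in>S. a \<bullet> y \<le> b" and T_ge: "\<forall>y\<in>T. b \<le> a \<bullet> y"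
    using separating_hyperplane_sets[OF \<open>convex S\<close>] \<open>z \<in> S\<close> by blast
  have inner_eq: "a \<bullet> y = fst a * fst y + snd a * snd y" for y
    by (simp add: inner_prod_def)
  have "\<forall>t>0. b \<le> (a \<bullet> z + snd a) + t * fst a"
    using T_ge[rule_format, of "(fst z + t, snd z + 1)" for t] \<open>r \<le> fst z\<close>
    by (auto simp: T_def inner_eq algebra_simps)
  then have "0 \<le> fst a" by (rule bounded_below_along_ray)
  have up: "\<forall>t>0. b \<le> a \<bullet> z + t * snd a"
    using T_ge[rule_format, of "(fst z, snd z + t)" for t] \<open>r \<le> fst z\<close>
    by (auto simp: T_def inner_eq algebra_simps)
  have "0 \<le> snd a" and "b \<le> a \<bullet> z" using bounded_below_along_ray[OF up] by auto
  then have "\<forall>y\<in>S. a \<bullet> y \<le> a \<bullet> z" using S_le by force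
  moreover have "fst a \<noteq> 0 \<or> snd a \<noteq> 0" using \<open>a \<noteq> 0\<close> by (simp add: prod_eq_iff)
  ultimately show ?thesis using that \<open>0 \<le> fst a\<close> \<open>0 \<le> snd a\<close> by (simp add: inner_eq)
qed

lemma exists_constrained_snd_maximizer:
  fixes S :: "(real \<times> real) set"
  assumes "compact S" and "z0 \<in> S" and "r \<le> fst z0"
  obtains z where "z \<in> S" "r \<le> fst z" "snd z0 \<le> snd z"
    "\<forall>y\<in>S. r \<le> fst y \<longrightarrow> snd y \<le> snd z"
proof -
  let ?F = "S \<inter> {y. r \<le> fst y}"
  have "compact ?F"
    using \<open>compact S\<close> by (intro compact_Int_closed closed_Collect_le continuous_intros)
  moreover have "z0 \<in> ?F" using assms by simp
  moreover have "continuous_on ?F snd" by (intro continuous_intros)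
  ultimately obtain z where "z \<in> ?F" "\<forall>y\<in>?F. snd y \<le> snd z"
    using continuous_attains_sup[of ?F snd] by blast
  with \<open>z0 \<in> ?F\<close> show ?thesis by (intro that[of z]) auto
qed

section \<open>Weighted sums of compact convex sets\<close>

definition weighted_sum_set :: "'c set \<Rightarrow> ('c \<Rightarrow> real) \<Rightarrow> ('c \<Rightarrow> 'a::real_vector set) \<Rightarrow> 'a set" where
  "weighted_sum_set F W K = {(\<Sum>C\<in>F. W C *\<^sub>R P C) | P. \<forall>C\<in>F. P C \<in> K C}"

lemma weighted_sum_set_insert:
  assumes "finite F" and "C \<notin> F"
  shows "weighted_sum_set (insert C F) W K =
    (\<lambda>(u, v). W C *\<^sub>R u + v) ` (K C \<times> weighted_sum_set F W K)"
proof (intro equalityI subsetI)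
  fix z assume "z \<in> weighted_sum_set (insert C F) W K"
  then obtain P where P: "\<forall>C'\<in>insert C F. P C' \<in> K C'" and z: "z = (\<Sum>C'\<in>insert C F. W C' *\<^sub>R P C')"
    unfolding weighted_sum_set_def by blast
  have "z = W C *\<^sub>R P C + (\<Sum>C'\<in>F. W C' *\<^sub>R P C')" using z assms by simp
  moreover have "(\<Sum>C'\<in>F. W C' *\<^sub>R P C') \<in> weighted_sum_set F W K"
    using P unfolding weighted_sum_set_def by blast
  ultimately show "z \<in> (\<lambda>(u, v). W C *\<^sub>R u + v) ` (K C \<times> weighted_sum_set F W K)"
    using P by (intro image_eqI[where x = "(P C, \<Sum>C'\<in>F. W C' *\<^sub>R P C')"]) auto
next
  fix z assume "z \<in> (\<lambda>(u, v). W C *\<^sub>R u + v) ` (K C \<times> weighted_sum_set F W K)"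
  then obtain u P where u: "u \<in> K C" and P: "\<forall>C'\<in>F. P C' \<in> K C'"
    and z: "z = W C *\<^sub>R u + (\<Sum>C'\<in>F. W C' *\<^sub>R P C')"
    unfolding weighted_sum_set_def by auto
  have "(\<Sum>C'\<in>F. W C' *\<^sub>R (P(C := u)) C') = (\<Sum>C'\<in>F. W C' *\<^sub>R P C')"
    using assms by (intro sum.cong) auto
  then have "z = (\<Sum>C'\<in>insert C F. W C' *\<^sub>R (P(C := u)) C')" using z assms by simp
  moreover have "\<forall>C'\<in>insert C F. (P(C := u)) C' \<in> K C'" using u P by auto
  ultimately show "z \<in> weighted_sum_set (insert C F) W K"
    unfolding weighted_sum_set_def by blast
qed

lemma compact_weighted_sum_set:
  fixes K :: "'c \<Rightarrow> 'a::real_normed_vector set"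
  assumes "finite F" and "\<forall>C\<in>F. compact (K C)"
  shows "compact (weighted_sum_set F W K)"
  using assms
proof (induction F rule: finite_induct)
  case empty
  then show ?case by (simp add: weighted_sum_set_def)
next
  case (insert C F)
  have "compact (K C \<times> weighted_sum_set F W K)" using insert by (intro compact_Times) auto
  then have "compact ((\<lambda>(u, v). W C *\<^sub>R u + v) ` (K C \<times> weighted_sum_set F W K))"
    by (intro compact_continuous_image) (auto intro!: continuous_intros simp: case_prod_unfold)
  then show ?case by (simp only: weighted_sum_set_insert[OF insert(1,2)])
qed

lemma convex_weighted_sum_set:
  assumes "\<forall>C\<in>F. convex (K C)"
  shows "convex (weighted_sum_set F W K)"
proof (rule convexI)
  fix x y and u v :: real assume "x \<in> weighted_sum_set F W K" "y \<in> weighted_sum_set F W K"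
    and uv: "0 \<le> u" "0 \<le> v" "u + v = 1"
  then obtain P1 P2 where P1: "\<forall>C\<in>F. P1 C \<in> K C" "x = (\<Sum>C\<in>F. W C *\<^sub>R P1 C)"
    and P2: "\<forall>C\<in>F. P2 C \<in> K C" "y = (\<Sum>C\<in>F. W C *\<^sub>R P2 C)"
    unfolding weighted_sum_set_def by blast
  define P where "P C = u *\<^sub>R P1 C + v *\<^sub>R P2 C" for C
  have "\<forall>C\<in>F. P C \<in> K C"
    using P1 P2 assms uv by (simp add: P_def convexD)
  moreover have "u *\<^sub>R x + v *\<^sub>R y = (\<Sum>C\<in>F. W C *\<^sub>R P C)"
    unfolding P1(2) P2(2) P_def scaleR_sum_right sum.distrib[symmetric]
    by (intro sum.cong) (auto simp: algebra_simps)
  ultimately show "u *\<^sub>R x + v *\<^sub>R y \<in> weighted_sum_set F W K"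
    unfolding weighted_sum_set_def by blast
qed

lemma weighted_sum_set_maximizer_componentwise:
  fixes g :: "'a::real_vector \<Rightarrow> real"
  assumes "linear g" and "finite F" and "\<forall>C\<in>F. 0 < W C"
    and P: "\<forall>C\<in>F. P C \<in> K C"
    and max: "\<forall>y\<in>weighted_sum_set F W K. g y \<le> g (\<Sum>C\<in>F. W C *\<^sub>R P C)"
    and "C \<in> F" and "w \<in> K C"
  shows "g w \<le> g (P C)"
proof -
  have split: "(\<Sum>C'\<in>F. W C' *\<^sub>R Q C') = W C *\<^sub>R Q C + (\<Sum>C'\<in>F - {C}. W C' *\<^sub>R Q C')" for Q
    using sum.remove[OF \<open>finite F\<close> \<open>C \<in> F\<close>] .
  have "(\<Sum>C'\<in>F - {C}. W C' *\<^sub>R (P(C := w)) C') = (\<Sum>C'\<in>F - {C}. W C' *\<^sub>R P C')"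
    by (intro sum.cong) auto
  moreover have "(\<Sum>C'\<in>F. W C' *\<^sub>R (P(C := w)) C') \<in> weighted_sum_set F W K"
    using P \<open>w \<in> K C\<close> unfolding weighted_sum_set_def by force
  ultimately have "g (W C *\<^sub>R w + (\<Sum>C'\<in>F - {C}. W C' *\<^sub>R P C'))
      \<le> g (W C *\<^sub>R P C + (\<Sum>C'\<in>F - {C}. W C' *\<^sub>R P C'))"
    using max split[of "P(C := w)"] split[of P] by simp
  then have "g (W C *\<^sub>R w) \<le> g (W C *\<^sub>R P C)"
    by (simp add: linear_add[OF \<open>linear g\<close>])
  then show ?thesis
    using assms(3) \<open>C \<in> F\<close> linear_scale[OF \<open>linear g\<close>] by simp
qed

section \<open>Permuting positions under a symmetric prior\<close>

lemma count_image_mset_mset_set: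
  "finite A \<Longrightarrow> count (image_mset f (mset_set A)) y = card {x\<in>A. f x = y}"
  by (simp add: count_image_mset' Collect_conj_eq) (metis (mono_tags, lifting) Collect_cong)

lemma exists_permutation_into_prefix:
  fixes A :: "nat set"
  assumes "A \<subseteq> {..<n}" and "card A \<le> k" and "k \<le> n"
  obtains \<nu> where "\<nu> permutes {..<n}" and "\<forall>x\<in>A. \<nu> x < k"
proof -
  (* Enlarge A to a k-set B: the indicators of B and of [k] take each value equally often on
     [n], so some permutation of [n] carries B onto [k]. *)
  obtain B where B: "A \<subseteq> B" "B \<subseteq> {..<n}" "card B = k"
    using exists_subset_between[of A k "{..<n}"] assms by auto
  have "image_mset (\<lambda>x. x \<in> B) (mset_set {..<n}) = image_mset (\<lambda>x. x < k) (mset_set {..<n})"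
  proof (rule multiset_eqI)
    fix y :: bool
    have "{x\<in>{..<n}. x \<in> B} = B" "{x\<in>{..<n}. x < k} = {..<k}"
      "{x\<in>{..<n}. x \<notin> B} = {..<n} - B" "{x\<in>{..<n}. \<not> x < k} = {..<n} - {..<k}"
      using B assms by auto
    then show "count (image_mset (\<lambda>x. x \<in> B) (mset_set {..<n})) y =
        count (image_mset (\<lambda>x. x < k) (mset_set {..<n})) y"
      using B assms finite_subset[OF B(2)] by (cases y) (simp_all add: count_image_mset_mset_set card_Diff_subset)
  qed
  then obtain \<nu> where "\<nu> permutes {..<n}" "\<forall>x\<in>{..<n}. (x \<in> B) = (\<nu> x < k)"
    using image_mset_eq_implies_permutes[of "{..<n}"] by blast
  then show ?thesis using that B by blast
qed

lemma pmf_permute_list: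
  assumes sym: "symmetric_instance q n" and "\<nu> permutes {..<n}" and "\<theta> \<in> set_pmf q"
  shows "pmf q (permute_list \<nu> \<theta>) = pmf q \<theta>"
proof -
  have "length \<theta> = n" using sym assms(3) unfolding symmetric_instance_def by blast
  then have "mset (permute_list \<nu> \<theta>) = mset \<theta>" using assms(2) by simp
  moreover have "\<forall>\<theta> \<theta>'. mset \<theta>' = mset \<theta> \<longrightarrow> pmf q \<theta> = pmf q \<theta>'"
    using sym unfolding symmetric_instance_def by blast
  ultimately show ?thesis by metis
qed

lemma permute_list_in_set_pmf:
  assumes "symmetric_instance q n" and "\<nu> permutes {..<n}" and "\<theta> \<in> set_pmf q"
  shows "permute_list \<nu> \<theta> \<in> set_pmf q"
  using pmf_permute_list[OF assms] assms(3) by (simp add: set_pmf_iff)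

lemma symmetric_instance_sum_permute_list:
  fixes g :: "'t list \<Rightarrow> 'a::real_vector"
  assumes sym: "symmetric_instance q n" and \<nu>: "\<nu> permutes {..<n}"
  shows "(\<Sum>\<theta>\<in>set_pmf q. pmf q \<theta> *\<^sub>R g (permute_list \<nu> \<theta>)) = (\<Sum>\<theta>\<in>set_pmf q. pmf q \<theta> *\<^sub>R g \<theta>)"
proof -
  have len: "length \<theta> = n" if "\<theta> \<in> set_pmf q" for \<theta>
    using sym that unfolding symmetric_instance_def by blast
  have "permute_list (inv \<nu>) (permute_list \<nu> \<theta>) = \<theta>"
    "permute_list \<nu> (permute_list (inv \<nu>) \<theta>) = \<theta>" if "\<theta> \<in> set_pmf q" for \<theta>
  proof -
    have "\<nu> permutes {..<length \<theta>}" "inv \<nu> permutes {..<length \<theta>}"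
      using \<nu> permutes_inv[OF \<nu>] len[OF that] by simp_all
    then show "permute_list (inv \<nu>) (permute_list \<nu> \<theta>) = \<theta>"
      "permute_list \<nu> (permute_list (inv \<nu>) \<theta>) = \<theta>"
      by (simp_all only: permute_list_compose[symmetric] permutes_inv_o[OF \<nu>] permute_list_id)
  qed
  then have bij: "bij_betw (permute_list \<nu>) (set_pmf q) (set_pmf q)"
    using permute_list_in_set_pmf[OF sym] \<nu> permutes_inv[OF \<nu>]
    by (intro bij_betw_byWitness[where f' = "permute_list (inv \<nu>)"]) auto
  have "(\<Sum>\<theta>\<in>set_pmf q. pmf q \<theta> *\<^sub>R g (permute_list \<nu> \<theta>)) =
      (\<Sum>\<theta>\<in>set_pmf q. pmf q (permute_list \<nu> \<theta>) *\<^sub>R g (permute_list \<nu> \<theta>))"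
    using pmf_permute_list[OF sym \<nu>] by simp
  also have "\<dots> = (\<Sum>\<theta>\<in>set_pmf q. pmf q \<theta> *\<^sub>R g \<theta>)"
    by (rule sum.reindex_bij_betw[OF bij])
  finally show ?thesis .
qed

section \<open>Utilities of a direct scheme\<close>

definition exp_on_signal ::
  "'t list pmf \<Rightarrow> ('t list \<Rightarrow> nat \<Rightarrow> real) \<Rightarrow> ('t \<Rightarrow> real) \<Rightarrow> nat \<Rightarrow> nat \<Rightarrow> real" where
  "exp_on_signal q \<phi> f \<sigma> i = (\<Sum>\<theta>\<in>set_pmf q. pmf q \<theta> * \<phi> \<theta> \<sigma> * f (\<theta> ! i))"

lemma sig_prob_nonneg:
  assumes "is_scheme q k \<phi>" and "\<sigma> < k"
  shows "0 \<le> sig_prob q \<phi> \<sigma>"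
  using assms unfolding sig_prob_def is_scheme_def by (auto intro!: sum_nonneg)

text \<open>This also holds for signals of probability 0, where \<open>cond_exp\<close> divides by zero.\<close>

lemma exp_on_signal_eq_sig_prob_mult_cond_exp:
  assumes "finite (set_pmf q)" and "is_scheme q k \<phi>" and "\<sigma> < k"
  shows "exp_on_signal q \<phi> f \<sigma> i = sig_prob q \<phi> \<sigma> * cond_exp q \<phi> f \<sigma> i"
proof (cases "sig_prob q \<phi> \<sigma> = 0")
  case True
  have "\<forall>\<theta>\<in>set_pmf q. pmf q \<theta> * \<phi> \<theta> \<sigma> = 0"
    using True assms sum_nonneg_eq_0_iff[OF assms(1), of "\<lambda>\<theta>. pmf q \<theta> * \<phi> \<theta> \<sigma>"]
    unfolding sig_prob_def is_scheme_def by simp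
  then show ?thesis using True by (auto simp: exp_on_signal_def intro!: sum.neutral)
next
  case False
  then show ?thesis by (simp add: exp_on_signal_def cond_exp_def)
qed

lemma sum_exp_on_signal:
  assumes "is_scheme q k \<phi>"
  shows "(\<Sum>\<sigma><k. exp_on_signal q \<phi> f \<sigma> i) = (\<Sum>\<theta>\<in>set_pmf q. pmf q \<theta> * f (\<theta> ! i))"
proof -
  have "(\<Sum>\<sigma><k. exp_on_signal q \<phi> f \<sigma> i) =
      (\<Sum>\<theta>\<in>set_pmf q. pmf q \<theta> * f (\<theta> ! i) * (\<Sum>\<sigma><k. \<phi> \<theta> \<sigma>))"
    unfolding exp_on_signal_def sum_distrib_left by (subst sum.swap) (simp add: ac_simps)
  also have "\<dots> = (\<Sum>\<theta>\<in>set_pmf q. pmf q \<theta> * f (\<theta> ! i))"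
    using assms unfolding is_scheme_def by simp
  finally show ?thesis .
qed

lemma exists_sender_preferred_response:
  assumes "direct_persuasive q n k \<phi> rec \<rho>"
  obtains a where "\<forall>\<sigma><k. a \<sigma> < n"
    and "\<forall>\<sigma><k. 0 < sig_prob q \<phi> \<sigma> \<longrightarrow> a \<sigma> \<in> best_actions q n \<phi> \<rho> \<sigma> \<and>
      cond_exp q \<phi> \<xi> \<sigma> (a \<sigma>) = Max (cond_exp q \<phi> \<xi> \<sigma> ` best_actions q n \<phi> \<rho> \<sigma>)"
proof -
  have "\<exists>i. \<sigma> < k \<longrightarrow> i < n \<and> (0 < sig_prob q \<phi> \<sigma> \<longrightarrow> i \<in> best_actions q n \<phi> \<rho> \<sigma> \<and>
      cond_exp q \<phi> \<xi> \<sigma> i = Max (cond_exp q \<phi> \<xi> \<sigma> ` best_actions q n \<phi> \<rho> \<sigma>))" for \<sigma>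
  proof (cases "\<sigma> < k \<and> 0 < sig_prob q \<phi> \<sigma>")
    case True
    then have "rec \<sigma> \<in> best_actions q n \<phi> \<rho> \<sigma>"
      using assms unfolding direct_persuasive_def best_actions_def by auto
    moreover have "finite (best_actions q n \<phi> \<rho> \<sigma>)" by (simp add: best_actions_def)
    ultimately have "Max (cond_exp q \<phi> \<xi> \<sigma> ` best_actions q n \<phi> \<rho> \<sigma>)
        \<in> cond_exp q \<phi> \<xi> \<sigma> ` best_actions q n \<phi> \<rho> \<sigma>"
      by (intro Max_in) auto
    then show ?thesis by (force simp: best_actions_def)
  next
    case False
    then show ?thesis using assms unfolding direct_persuasive_def by auto
  qed
  then show ?thesis using that by metis
qed

lemma sender_utility_eq_sum_exp_on_signal:
  assumes "finite (set_pmf q)" and "is_scheme q k \<phi>"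
    and "\<forall>\<sigma><k. 0 < sig_prob q \<phi> \<sigma> \<longrightarrow>
      cond_exp q \<phi> \<xi> \<sigma> (a \<sigma>) = Max (cond_exp q \<phi> \<xi> \<sigma> ` best_actions q n \<phi> \<rho> \<sigma>)"
  shows "sender_utility q n k \<phi> \<rho> \<xi> = (\<Sum>\<sigma><k. exp_on_signal q \<phi> \<xi> \<sigma> (a \<sigma>))"
proof -
  have "sender_utility q n k \<phi> \<rho> \<xi> =
      (\<Sum>\<sigma><k. if 0 < sig_prob q \<phi> \<sigma> then sig_prob q \<phi> \<sigma> * cond_exp q \<phi> \<xi> \<sigma> (a \<sigma>) else 0)"
    unfolding sender_utility_def using assms(3)
    by (simp add: sum.inter_filter[symmetric] lessThan_def Collect_conj_eq[symmetric])
  also have "\<dots> = (\<Sum>\<sigma><k. exp_on_signal q \<phi> \<xi> \<sigma> (a \<sigma>))"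
    using sig_prob_nonneg[OF assms(2)] exp_on_signal_eq_sig_prob_mult_cond_exp[OF assms(1,2)]
    by (intro sum.cong) (auto simp: order_le_less)
  finally show ?thesis .
qed

lemma rho_E_le_sum_exp_on_signal:
  assumes "finite (set_pmf q)" and "is_scheme q k \<phi>" and "0 < n"
    and "\<forall>\<sigma><k. 0 < sig_prob q \<phi> \<sigma> \<longrightarrow> a \<sigma> \<in> best_actions q n \<phi> \<rho> \<sigma>"
  shows "rho_E q n \<rho> \<le> (\<Sum>\<sigma><k. exp_on_signal q \<phi> \<rho> \<sigma> (a \<sigma>))"
proof -
  have "rho_E q n \<rho> \<in> (\<lambda>i. \<Sum>\<theta>\<in>set_pmf q. pmf q \<theta> * \<rho> (\<theta> ! i)) ` {..<n}"
    unfolding rho_E_def using \<open>0 < n\<close> by (intro Max_in) auto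
  then obtain i where "i < n" and "rho_E q n \<rho> = (\<Sum>\<theta>\<in>set_pmf q. pmf q \<theta> * \<rho> (\<theta> ! i))"
    by auto
  then have "rho_E q n \<rho> = (\<Sum>\<sigma><k. exp_on_signal q \<phi> \<rho> \<sigma> i)"
    using sum_exp_on_signal[OF assms(2)] by simp
  also have "\<dots> \<le> (\<Sum>\<sigma><k. exp_on_signal q \<phi> \<rho> \<sigma> (a \<sigma>))"
  proof (intro sum_mono)
    fix \<sigma> assume "\<sigma> \<in> {..<k}"
    then have "cond_exp q \<phi> \<rho> \<sigma> i \<le> cond_exp q \<phi> \<rho> \<sigma> (a \<sigma>)" if "0 < sig_prob q \<phi> \<sigma>"
      using assms(4) that \<open>i < n\<close> by (auto simp: best_actions_def)
    moreover have "0 \<le> sig_prob q \<phi> \<sigma>"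
      using \<open>\<sigma> \<in> {..<k}\<close> sig_prob_nonneg[OF assms(2)] by simp
    ultimately show "exp_on_signal q \<phi> \<rho> \<sigma> i \<le> exp_on_signal q \<phi> \<rho> \<sigma> (a \<sigma>)"
      using \<open>\<sigma> \<in> {..<k}\<close> exp_on_signal_eq_sig_prob_mult_cond_exp[OF assms(1,2)]
      by (cases "sig_prob q \<phi> \<sigma> = 0") (simp_all add: mult_left_mono)
  qed
  finally show ?thesis .
qed

lemma sum_pmf_scaleR_played_types:
  "(\<Sum>\<theta>\<in>set_pmf q. pmf q \<theta> *\<^sub>R (\<Sum>\<sigma><k. \<phi> \<theta> \<sigma> *\<^sub>R type_pt \<rho> \<xi> (\<theta> ! a \<sigma>))) =
    (\<Sum>\<sigma><k. exp_on_signal q \<phi> \<rho> \<sigma> (a \<sigma>), \<Sum>\<sigma><k. exp_on_signal q \<phi> \<xi> \<sigma> (a \<sigma>))"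
  unfolding exp_on_signal_def prod_eq_iff fst_sum snd_sum
  by (simp add: type_pt_def fst_sum snd_sum sum_distrib_left mult.assoc sum.swap[of _ "{..<k}"])

section \<open>Point collections\<close>

lemma exists_symmetrized_state_points:
  assumes sym: "symmetric_instance q n" and "is_scheme q k \<phi>" and "k \<le> n"
    and a: "\<forall>\<sigma><k. a \<sigma> < n"
  obtains F where "\<forall>\<theta>\<in>set_pmf q. F \<theta> \<in> conv_types \<rho> \<xi> (set (take k \<theta>))"
    and "(\<Sum>\<theta>\<in>set_pmf q. pmf q \<theta> *\<^sub>R F \<theta>) =
      (\<Sum>\<theta>\<in>set_pmf q. pmf q \<theta> *\<^sub>R (\<Sum>\<sigma><k. \<phi> \<theta> \<sigma> *\<^sub>R type_pt \<rho> \<xi> (\<theta> ! a \<sigma>)))"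
proof -
  obtain \<nu> where \<nu>: "\<nu> permutes {..<n}" and into: "\<forall>x\<in>a ` {..<k}. \<nu> x < k"
    using exists_permutation_into_prefix[of "a ` {..<k}" n k] a \<open>k \<le> n\<close>
      card_image_le[of "{..<k}" a] by auto
  define G where "G \<theta> = (\<Sum>\<sigma><k. \<phi> \<theta> \<sigma> *\<^sub>R type_pt \<rho> \<xi> (\<theta> ! a \<sigma>))" for \<theta>
  have "G (permute_list \<nu> \<theta>) \<in> conv_types \<rho> \<xi> (set (take k \<theta>))" if \<theta>: "\<theta> \<in> set_pmf q" for \<theta>
  proof -
    have "length \<theta> = n" using sym \<theta> unfolding symmetric_instance_def by blast
    have "permute_list \<nu> \<theta> ! a \<sigma> \<in> set (take k \<theta>)" if "\<sigma> < k" for \<sigma>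
    proof -
      have "\<nu> (a \<sigma>) < k" using into that by simp
      moreover have "permute_list \<nu> \<theta> ! a \<sigma> = \<theta> ! \<nu> (a \<sigma>)"
        using permute_list_nth[of \<nu> \<theta> "a \<sigma>"] \<nu> a that \<open>length \<theta> = n\<close> by simp
      ultimately show ?thesis
        using nth_mem[of "\<nu> (a \<sigma>)" "take k \<theta>"] \<open>length \<theta> = n\<close> \<open>k \<le> n\<close> by simp
    qed
    moreover have "permute_list \<nu> \<theta> \<in> set_pmf q" using permute_list_in_set_pmf[OF sym \<nu> \<theta>] .
    ultimately show ?thesis
      using \<open>is_scheme q k \<phi>\<close> unfolding G_def conv_types_def is_scheme_def
      by (intro convex_sum) (auto intro: hull_inc)
  qed
  moreover have "(\<Sum>\<theta>\<in>set_pmf q. pmf q \<theta> *\<^sub>R G (permute_list \<nu> \<theta>)) = (\<Sum>\<theta>\<in>set_pmf q. pmf q \<theta> *\<^sub>R G \<theta>)"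
    by (rule symmetric_instance_sum_permute_list[OF sym \<nu>])
  ultimately show ?thesis using that[of "\<lambda>\<theta>. G (permute_list \<nu> \<theta>)"] by (simp add: G_def)
qed

lemma supp_sets_subset_image:
  "supp_sets q k \<subseteq> (\<lambda>\<theta>. set (take k \<theta>)) ` set_pmf q"
proof
  fix C assume "C \<in> supp_sets q k"
  then have "qC q k C \<noteq> 0" by (simp add: supp_sets_def)
  then obtain \<theta> where "\<theta> \<in> set_pmf q" and "(if set (take k \<theta>) = C then pmf q \<theta> else 0) \<noteq> 0"
    unfolding qC_def by (rule sum.not_neutral_contains_not_neutral)
  then show "C \<in> (\<lambda>\<theta>. set (take k \<theta>)) ` set_pmf q"
    by (metis (full_types) image_eqI)
qed

lemma uR_uS_pc_eq_sum: "(uR_pc q k P, uS_pc q k P) = (\<Sum>C\<in>supp_sets q k. qC q k C *\<^sub>R P C)"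
  by (simp add: uR_pc_def uS_pc_def prod_eq_iff fst_sum snd_sum)

lemma exists_point_collection_of_state_points:
  assumes fin: "finite (set_pmf q)"
    and F: "\<forall>\<theta>\<in>set_pmf q. F \<theta> \<in> conv_types \<rho> \<xi> (set (take k \<theta>))"
  obtains P where "point_collection q k \<rho> \<xi> P"
    and "(uR_pc q k P, uS_pc q k P) = (\<Sum>\<theta>\<in>set_pmf q. pmf q \<theta> *\<^sub>R F \<theta>)"
proof -
  define \<Theta> where "\<Theta> C = {\<theta>\<in>set_pmf q. set (take k \<theta>) = C}" for C
  have qC_eq: "qC q k C = (\<Sum>\<theta>\<in>\<Theta> C. pmf q \<theta>)" for C
    unfolding qC_def \<Theta>_def using fin by (simp add: sum.inter_filter)
  define P where "P C = (\<Sum>\<theta>\<in>\<Theta> C. (pmf q \<theta> / qC q k C) *\<^sub>R F \<theta>)" for C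
  have "P C \<in> conv_types \<rho> \<xi> C" if "C \<in> supp_sets q k" for C
  proof -
    have "0 < qC q k C" using that by (simp add: supp_sets_def)
    then have "(\<Sum>\<theta>\<in>\<Theta> C. pmf q \<theta> / qC q k C) = 1"
      by (simp add: qC_eq sum_divide_distrib[symmetric])
    then show ?thesis
      unfolding P_def using fin F \<open>0 < qC q k C\<close>
      by (intro convex_sum) (auto simp: \<Theta>_def conv_types_def)
  qed
  moreover have "(\<Sum>C\<in>supp_sets q k. qC q k C *\<^sub>R P C) = (\<Sum>\<theta>\<in>set_pmf q. pmf q \<theta> *\<^sub>R F \<theta>)"
  proof -
    have "set (take k \<theta>) \<in> supp_sets q k" if "\<theta> \<in> set_pmf q" for \<theta>
    proof -
      have "pmf q \<theta> \<le> qC q k (set (take k \<theta>))"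
        unfolding qC_eq using fin that by (intro member_le_sum) (auto simp: \<Theta>_def)
      then show ?thesis using pmf_positive[OF that] by (simp add: supp_sets_def)
    qed
    moreover have "finite (supp_sets q k)"
      using finite_surj[OF fin supp_sets_subset_image] .
    ultimately have "(\<Sum>C\<in>supp_sets q k. \<Sum>\<theta>\<in>\<Theta> C. pmf q \<theta> *\<^sub>R F \<theta>) = (\<Sum>\<theta>\<in>set_pmf q. pmf q \<theta> *\<^sub>R F \<theta>)"
      unfolding \<Theta>_def using fin by (intro sum.group) auto
    moreover have "qC q k C *\<^sub>R P C = (\<Sum>\<theta>\<in>\<Theta> C. pmf q \<theta> *\<^sub>R F \<theta>)" if "C \<in> supp_sets q k" for C
      using that unfolding P_def scaleR_sum_right by (simp add: supp_sets_def)
    ultimately show ?thesis by simp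
  qed
  ultimately show ?thesis
    using that[of P] uR_uS_pc_eq_sum[of q k P] unfolding point_collection_def by simp
qed

lemma corresponds_to_slope_of_supporting_direction:
  assumes "0 \<le> a1" and "0 \<le> a2" and "a1 \<noteq> 0 \<or> a2 \<noteq> 0" and "p \<in> conv_types \<rho> \<xi> C"
    and max: "\<forall>w\<in>conv_types \<rho> \<xi> C. a1 * fst w + a2 * snd w \<le> a1 * fst p + a2 * snd p"
  shows "corresponds_to_slope \<rho> \<xi> C (if a2 = 0 then -\<infinity> else ereal (- a1 / a2)) p"
proof (cases "a2 = 0")
  case True
  then show ?thesis
    using assms unfolding corresponds_to_slope_def by auto
next
  case False
  have "snd w - (- a1 / a2) * fst w \<le> snd p - (- a1 / a2) * fst p" if "w \<in> conv_types \<rho> \<xi> C" for w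
  proof -
    have "(a1 * fst w + a2 * snd w) / a2 \<le> (a1 * fst p + a2 * snd p) / a2"
      using max that \<open>0 \<le> a2\<close> by (simp add: divide_right_mono)
    then show ?thesis using False by (simp add: field_simps)
  qed
  then show ?thesis using False assms unfolding corresponds_to_slope_def by auto
qed

lemma exists_supported_point_collection:
  assumes fin: "finite (set_pmf q)" and P0: "point_collection q k \<rho> \<xi> P0"
    and R: "r \<le> uR_pc q k P0"
  obtains P a1 a2 where "point_collection q k \<rho> \<xi> P"
    and "r \<le> uR_pc q k P" and "uS_pc q k P0 \<le> uS_pc q k P"
    and "0 \<le> a1" "0 \<le> a2" "a1 \<noteq> 0 \<or> a2 \<noteq> 0"
    and "\<forall>C\<in>supp_sets q k. \<forall>w\<in>conv_types \<rho> \<xi> C.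
      a1 * fst w + a2 * snd w \<le> a1 * fst (P C) + a2 * snd (P C)"
proof -
  let ?SC = "supp_sets q k" and ?K = "conv_types \<rho> \<xi>"
  let ?S = "weighted_sum_set ?SC (qC q k) ?K"
  have "finite ?SC" using finite_surj[OF fin supp_sets_subset_image] .
  have "finite C" if "C \<in> ?SC" for C using supp_sets_subset_image that by auto
  then have "compact ?S"
    using \<open>finite ?SC\<close>
    by (intro compact_weighted_sum_set) (auto simp: conv_types_def finite_imp_compact_convex_hull)
  moreover have "(uR_pc q k P0, uS_pc q k P0) \<in> ?S"
    using P0 unfolding uR_uS_pc_eq_sum weighted_sum_set_def point_collection_def by blast
  ultimately obtain z where "z \<in> ?S" and "r \<le> fst z" and "uS_pc q k P0 \<le> snd z"
    and z_max: "\<forall>y\<in>?S. r \<le> fst y \<longrightarrow> snd y \<le> snd z"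
    using exists_constrained_snd_maximizer[of ?S "(uR_pc q k P0, uS_pc q k P0)" r] R by auto
  then obtain P where P: "point_collection q k \<rho> \<xi> P" and z: "z = (uR_pc q k P, uS_pc q k P)"
    unfolding weighted_sum_set_def point_collection_def uR_uS_pc_eq_sum by blast
  have "convex ?S" by (intro convex_weighted_sum_set) (simp add: conv_types_def)
  then obtain a1 a2 where a: "0 \<le> a1" "0 \<le> a2" "a1 \<noteq> 0 \<or> a2 \<noteq> 0"
    and "\<forall>y\<in>?S. a1 * fst y + a2 * snd y \<le> a1 * fst z + a2 * snd z"
    using constrained_maximizer_supporting_direction \<open>z \<in> ?S\<close> \<open>r \<le> fst z\<close> z_max by blast
  moreover have "linear (\<lambda>y::real \<times> real. a1 * fst y + a2 * snd y)"
    by (auto intro!: linearI simp: algebra_simps)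
  moreover have "\<forall>C\<in>?SC. 0 < qC q k C" and "\<forall>C\<in>?SC. P C \<in> ?K C"
    using P by (auto simp: supp_sets_def point_collection_def)
  ultimately have "\<forall>C\<in>?SC. \<forall>w\<in>?K C. a1 * fst w + a2 * snd w \<le> a1 * fst (P C) + a2 * snd (P C)"
    using weighted_sum_set_maximizer_componentwise[OF _ \<open>finite ?SC\<close>]
    unfolding z uR_uS_pc_eq_sum by blast
  with P a \<open>r \<le> fst z\<close> \<open>uS_pc q k P0 \<le> snd z\<close> show ?thesis
    unfolding z by (intro that) auto
qed

lemma exists_s_pareto_improvement:
  assumes "finite (set_pmf q)" and "point_collection q k \<rho> \<xi> P0"
    and "rho_E q n \<rho> \<le> uR_pc q k P0"
  shows "\<exists>s\<le>0. \<exists>P. s_pareto q n k \<rho> \<xi> s P \<and> uS_pc q k P0 \<le> uS_pc q k P"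
proof -
  obtain P a1 a2 where P: "point_collection q k \<rho> \<xi> P"
    and "rho_E q n \<rho> \<le> uR_pc q k P" and "uS_pc q k P0 \<le> uS_pc q k P"
    and a: "0 \<le> a1" "0 \<le> a2" "a1 \<noteq> 0 \<or> a2 \<noteq> 0"
    and supporting: "\<forall>C\<in>supp_sets q k. \<forall>w\<in>conv_types \<rho> \<xi> C.
      a1 * fst w + a2 * snd w \<le> a1 * fst (P C) + a2 * snd (P C)"
    using exists_supported_point_collection[OF assms] by blast
  define s :: ereal where "s = (if a2 = 0 then -\<infinity> else ereal (- a1 / a2))"
  have "\<forall>C\<in>supp_sets q k. corresponds_to_slope \<rho> \<xi> C s (P C)"
    using corresponds_to_slope_of_supporting_direction[OF a] supporting P
    unfolding s_def point_collection_def by blast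
  then have "s_pareto q n k \<rho> \<xi> s P"
    using P \<open>rho_E q n \<rho> \<le> uR_pc q k P\<close> unfolding s_pareto_def by blast
  moreover have "s \<le> 0" using a by (simp add: s_def)
  ultimately show ?thesis using \<open>uS_pc q k P0 \<le> uS_pc q k P\<close> by blast
qed

theorem lemma3p2:
  fixes q :: "'t list pmf" and n k :: nat and \<rho> \<xi> :: "'t \<Rightarrow> real"
    and \<phi> :: "'t list \<Rightarrow> nat \<Rightarrow> real" and rec :: "nat \<Rightarrow> nat"
  assumes "symmetric_instance q n"
    and "2 \<le> k" and "k \<le> n"
    and "is_scheme q k \<phi>"
    and "direct_persuasive q n k \<phi> rec \<rho>"
    and "\<forall>\<sigma><k. rec \<sigma> < k"
  shows "\<exists>s::ereal. s \<le> 0 \<and> (\<exists>P. s_pareto q n k \<rho> \<xi> s P \<and>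
           sender_utility q n k \<phi> \<rho> \<xi> \<le> uS_pc q k P)"
proof -
  have fin: "finite (set_pmf q)" using assms(1) by (simp add: symmetric_instance_def)
  obtain a where a_lt: "\<forall>\<sigma><k. a \<sigma> < n"
    and a: "\<forall>\<sigma><k. 0 < sig_prob q \<phi> \<sigma> \<longrightarrow> a \<sigma> \<in> best_actions q n \<phi> \<rho> \<sigma> \<and>
      cond_exp q \<phi> \<xi> \<sigma> (a \<sigma>) = Max (cond_exp q \<phi> \<xi> \<sigma> ` best_actions q n \<phi> \<rho> \<sigma>)"
    using exists_sender_preferred_response[OF assms(5)] by blast
  obtain F where F: "\<forall>\<theta>\<in>set_pmf q. F \<theta> \<in> conv_types \<rho> \<xi> (set (take k \<theta>))"
    and F_sum: "(\<Sum>\<theta>\<in>set_pmf q. pmf q \<theta> *\<^sub>R F \<theta>) =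
      (\<Sum>\<sigma><k. exp_on_signal q \<phi> \<rho> \<sigma> (a \<sigma>), \<Sum>\<sigma><k. exp_on_signal q \<phi> \<xi> \<sigma> (a \<sigma>))"
    using exists_symmetrized_state_points[OF assms(1,4,3) a_lt]
    unfolding sum_pmf_scaleR_played_types by blast
  obtain P0 where P0: "point_collection q k \<rho> \<xi> P0"
    and P0_sum: "(uR_pc q k P0, uS_pc q k P0) = (\<Sum>\<theta>\<in>set_pmf q. pmf q \<theta> *\<^sub>R F \<theta>)"
    using exists_point_collection_of_state_points[OF fin F] by blast
  have "rho_E q n \<rho> \<le> uR_pc q k P0"
    using rho_E_le_sum_exp_on_signal[OF fin assms(4), of n a \<rho>] assms(2,3) a P0_sum F_sum by simp
  then obtain s P where "s \<le> 0" "s_pareto q n k \<rho> \<xi> s P" "uS_pc q k P0 \<le> uS_pc q k P"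
    using exists_s_pareto_improvement[OF fin P0] by blast
  moreover have "sender_utility q n k \<phi> \<rho> \<xi> = uS_pc q k P0"
    using sender_utility_eq_sum_exp_on_signal[OF fin assms(4)] a P0_sum F_sum by simp
  ultimately show ?thesis by auto
qed

end
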